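(* Let $m>1$ be odd, $G=\mathbb{Z}_2\times\mathbb{Z}_m$, and let $k_2,\ldots,k_{2m-1}\in\{0,1\}$. Let $\psi=\lambda\prod_{j=2}^{2m-1}\partial_j^{k_j}\in Z^2(G,\langle-1\rangle)$. Then $\psi$ is quasi-orthogonal if and only if \[ B=\{j-1: 2\le j\le m,\ k_j=1\},\qquad D=\{j-m-1: m+1\le j\le 2m-1,\ k_j=1\} \] (as subsets of $\mathbb{Z}_m$) are $2$-$\{m;|B|,|D|;|B|+|D|-\frac{m+1}{2}\}$ ASDS and the multiset $B-D$ is symmetric.
   Context: A cocycle over a finite group $G$ is a map $\psi:G\times G\to\langle-1\rangle=\{\pm1\}$ with $\psi(g,h)\psi(gh,k)=\psi(g,hk)\psi(h,k)$ for all $g,h,k$; all cocycles are normalized ($\psi(1,1)=1$); they form the group $Z^2(G,\langle-1\rangle)$ under pointwise product. For $\phi:G\to\{\pm1\}$ the coboundary is $\partial\phi(g,h)=\phi(g)^{-1}\phi(h)^{-1}\phi(gh)$; coboundaries form $B^2(G,\langle-1\rangle)$. $M_\psi=[\psi(g,h)]_{g,h\in G}$; the row excess $RE(M_\psi)$ is the sum of absolute values of the row sums of $M_\psi$ over all rows except the one indexed by the identity. If $|G|=4t+2$, $\psi$ is quasi-orthogonal if either $\psi\notin B^2$ and $RE(M_\psi)=4t$, or $\psi\in B^2$ and $RE(M_\psi)=8t+2$. For $G=\mathbb{Z}_2\times\mathbb{Z}_m$ (written additively): order the elements as $g_1=(0,0),g_2=(0,1),\ldots,g_m=(0,m-1),g_{m+1}=(1,0),\ldots,g_{2m}=(1,m-1)$.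 Define $\lambda((a,u),(b,w))=-1$ if $a=b=1$ and $1$ otherwise. For $2\le j\le 2m$ let $\varepsilon_j:G\to\{\pm1\}$ be $-1$ at $g_j$ and $1$ elsewhere, and $\partial_j=\partial\varepsilon_j$, i.e. $\partial_j(g,h)=\varepsilon_j(g)\varepsilon_j(h)\varepsilon_j(g+h)$. Then $\{\lambda,\partial_2,\ldots,\partial_{2m-1}\}$ is a basis of $Z^2(G,\langle-1\rangle)$. For $B,D\subseteq\mathbb{Z}_m$ and $a\ne0$, $N_{B,D}(a)=|\{(x,x')\in B^2: x-x'\equiv a\}|+|\{(y,y')\in D^2: y-y'\equiv a\}|$; $B,D$ are $2$-$\{m;k,r;\mu\}$ ASDS if $|B|=k$, $|D|=r$ and $N_{B,D}(a)\in\{\mu,\mu+1\}$ for all $a\ne0$. The multiset $B-D$ is symmetric if for each $w\in\mathbb{Z}_m$, $|\{(x,y)\in B\times D:x-y\equiv w\}|=|\{(x,y)\in B\times D:x-y\equiv -w\}|$. *)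

theory Defs
  imports "HOL-Number_Theory.Cong"
begin

definition Gset :: "nat \<Rightarrow> (nat \<times> nat) set" where
  "Gset m = {0..<2} \<times> {0..<m}"

definition gadd :: "nat \<Rightarrow> nat \<times> nat \<Rightarrow> nat \<times> nat \<Rightarrow> nat \<times> nat" where
  "gadd m g h = ((fst g + fst h) mod 2, (snd g + snd h) mod m)"

text \<open>Ordering g_1 = (0,0), ..., g_m = (0,m-1), g_(m+1) = (1,0), ..., g_(2m) = (1,m-1).\<close>
definition gelt :: "nat \<Rightarrow> nat \<Rightarrow> nat \<times> nat" where
  "gelt m j = (if j \<le> m then (0, j - 1) else (1, j - m - 1))"

definition lam :: "nat \<times> nat \<Rightarrow> nat \<times> nat \<Rightarrow> int" where
  "lam g h = (if fst g = 1 \<and> fst h = 1 then -1 else 1)"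

definition eps :: "nat \<Rightarrow> nat \<Rightarrow> nat \<times> nat \<Rightarrow> int" where
  "eps m j g = (if g = gelt m j then -1 else 1)"

text \<open>Coboundary of phi : G -> {1,-1}; since values are +-1, phi(g)^(-1) = phi(g).\<close>
definition cobound :: "nat \<Rightarrow> (nat \<times> nat \<Rightarrow> int) \<Rightarrow> nat \<times> nat \<Rightarrow> nat \<times> nat \<Rightarrow> int" where
  "cobound m \<phi> g h = \<phi> g * \<phi> h * \<phi> (gadd m g h)"

definition psi :: "nat \<Rightarrow> (nat \<Rightarrow> nat) \<Rightarrow> nat \<times> nat \<Rightarrow> nat \<times> nat \<Rightarrow> int" where
  "psi m k g h = lam g h * (\<Prod>j\<in>{2..2*m-1}. (cobound m (eps m j) g h) ^ (k j))"

definition is_coboundary :: "nat \<Rightarrow> (nat \<times> nat \<Rightarrow> nat \<times> nat \<Rightarrow> int) \<Rightarrow> bool" where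
  "is_coboundary m \<psi> \<longleftrightarrow> (\<exists>\<phi>. (\<forall>g\<in>Gset m. \<phi> g \<in> {1, -1}) \<and>
      (\<forall>g\<in>Gset m. \<forall>h\<in>Gset m. \<psi> g h = cobound m \<phi> g h))"

definition row_excess :: "nat \<Rightarrow> (nat \<times> nat \<Rightarrow> nat \<times> nat \<Rightarrow> int) \<Rightarrow> int" where
  "row_excess m \<psi> = (\<Sum>g\<in>Gset m - {(0,0)}. \<bar>\<Sum>h\<in>Gset m. \<psi> g h\<bar>)"

definition quasi_orthogonal :: "nat \<Rightarrow> (nat \<times> nat \<Rightarrow> nat \<times> nat \<Rightarrow> int) \<Rightarrow> bool" where
  "quasi_orthogonal m \<psi> \<longleftrightarrow>
     (let t = (int (card (Gset m)) - 2) div 4 in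
       (\<not> is_coboundary m \<psi> \<and> row_excess m \<psi> = 4 * t) \<or>
       (is_coboundary m \<psi> \<and> row_excess m \<psi> = 8 * t + 2))"

definition N_BD :: "nat \<Rightarrow> nat set \<Rightarrow> nat set \<Rightarrow> nat \<Rightarrow> int" where
  "N_BD m B D a = int (card {(x, x'). x \<in> B \<and> x' \<in> B \<and> [int x - int x' = int a] (mod int m)})
                + int (card {(y, y'). y \<in> D \<and> y' \<in> D \<and> [int y - int y' = int a] (mod int m)})"

definition ASDS :: "nat \<Rightarrow> nat \<Rightarrow> nat \<Rightarrow> int \<Rightarrow> nat set \<Rightarrow> nat set \<Rightarrow> bool" where
  "ASDS m k r \<mu> B D \<longleftrightarrow> B \<subseteq> {0..<m} \<and> D \<subseteq> {0..<m} \<and> card B = k \<and> card D = r \<and>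
     (\<forall>a\<in>{1..<m}. N_BD m B D a \<in> {\<mu>, \<mu> + 1})"

definition diff_symmetric :: "nat \<Rightarrow> nat set \<Rightarrow> nat set \<Rightarrow> bool" where
  "diff_symmetric m B D \<longleftrightarrow> (\<forall>w\<in>{0..<m}.
     card {(x, y). x \<in> B \<and> y \<in> D \<and> [int x - int y = int w] (mod int m)} =
     card {(x, y). x \<in> B \<and> y \<in> D \<and> [int x - int y = - int w] (mod int m)})"

end

theory Submission
  imports Defs
begin

text \<open>
  Let \<open>\<phi>\<close> be the sign function on \<open>G\<close> that is \<open>-1\<close> exactly on \<open>{0} \<times> B \<union> {1} \<times> D\<close>.
  Then \<open>\<psi> = \<lambda> \<cdot> \<partial>\<phi>\<close>, which is not a coboundary because \<open>\<lambda>\<close> is not. The row sums of \<open>M\<^sub>\<psi>\<close>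
  are correlations of the sign functions of \<open>B\<close> and \<open>D\<close>: writing \<open>N = N_BD m B D\<close>, the row of
  \<open>(0,a)\<close> sums to \<open>\<plusminus>(2m - 4(|B| + |D|) + 4 N(a)) = \<plusminus>(4 (N(a) - \<mu>) - 2)\<close>, where the oddness of
  \<open>m\<close> enters, and the row of \<open>(1,a)\<close> sums to \<open>\<plusminus>4\<close> times the difference of the multiplicities
  of \<open>a\<close> and \<open>-a\<close> in \<open>B - D\<close>. Hence each row \<open>(0,a)\<close> with \<open>a \<noteq> 0\<close> contributes at least \<open>2\<close>,
  with equality iff \<open>N(a) \<in> {\<mu>, \<mu> + 1}\<close>, and the row excess attains its lower bound
  \<open>2m - 2 = 4t\<close> exactly when \<open>B, D\<close> are ASDS and \<open>B - D\<close> is symmetric.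
\<close>

definition set_sign :: "'a set \<Rightarrow> 'a \<Rightarrow> int" where
  "set_sign S x = (if x \<in> S then -1 else 1)"

lemma set_sign_abs [simp]: "\<bar>set_sign S x\<bar> = 1"
  by (simp add: set_sign_def)

definition diff_count :: "nat \<Rightarrow> nat set \<Rightarrow> nat set \<Rightarrow> nat \<Rightarrow> nat" where
  "diff_count m X Y a = card {(x, y). x \<in> X \<and> y \<in> Y \<and> [int x - int y = int a] (mod int m)}"

lemma sum_rotate_mod:
  fixes f :: "nat \<Rightarrow> 'b::comm_monoid_add"
  assumes "m > 0"
  shows "(\<Sum>u\<in>{0..<m}. f ((a + u) mod m)) = (\<Sum>u\<in>{0..<m}. f u)"
proof -
  have inj: "inj_on (\<lambda>u. (a + u) mod m) {0..<m}"
  proof (rule inj_onI)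
    fix u v assume "u \<in> {0..<m}" "v \<in> {0..<m}" "(a + u) mod m = (a + v) mod m"
    then show "u = v"
      by (metis atLeastLessThan_iff cong_add_lcancel_nat cong_def mod_less)
  qed
  have "(\<lambda>u. (a + u) mod m) ` {0..<m} = {0..<m}"
    using assms by (intro card_subset_eq) (auto simp: card_image[OF inj])
  then show ?thesis
    using sum.reindex[OF inj, of f] by simp
qed

lemma diff_count_eq_card_rotate:
  assumes "X \<subseteq> {0..<m}" "Y \<subseteq> {0..<m}"
  shows "diff_count m X Y a = card {u\<in>{0..<m}. (a + u) mod m \<in> X \<and> u \<in> Y}"
proof -
  have shift: "[int x - int y = int a] (mod int m) \<longleftrightarrow> x = (a + y) mod m"
    if "x < m" for x y
  proof -
    have "[int x - int y = int a] (mod int m) \<longleftrightarrow> [int x = int (a + y)] (mod int m)"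
      by (metis add.commute cong_add_lcancel diff_add_cancel of_nat_add)
    also have "\<dots> \<longleftrightarrow> x = (a + y) mod m"
      using that by (simp add: cong_def flip: of_nat_add zmod_int)
    finally show ?thesis .
  qed
  have "{(x, y). x \<in> X \<and> y \<in> Y \<and> [int x - int y = int a] (mod int m)}
      = (\<lambda>u. ((a + u) mod m, u)) ` {u\<in>{0..<m}. (a + u) mod m \<in> X \<and> u \<in> Y}"
    using assms shift by (auto simp: image_iff subset_iff)
  moreover have "inj (\<lambda>u. ((a + u) mod m, u))"
    by (rule injI) simp
  ultimately show ?thesis
    unfolding diff_count_def by (simp add: card_image inj_on_subset)
qed

lemma sum_set_sign_rotate_product:
  assumes "m > 0" "X \<subseteq> {0..<m}" "Y \<subseteq> {0..<m}"
  shows "(\<Sum>u\<in>{0..<m}. set_sign X ((a + u) mod m) * set_sign Y u)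
       = int m - 2 * int (card X) - 2 * int (card Y) + 4 * int (diff_count m X Y a)"
proof -
  have count: "(\<Sum>u\<in>{0..<m}. of_bool (u \<in> Z) :: int) = int (card Z)"
    if "Z \<subseteq> {0..<m}" for Z
    using that by (simp add: Int_absorb1)
  have "(\<Sum>u\<in>{0..<m}. of_bool ((a + u) mod m \<in> X) :: int) = (\<Sum>u\<in>{0..<m}. of_bool (u \<in> X))"
    by (rule sum_rotate_mod[OF assms(1)])
  also have "\<dots> = int (card X)"
    by (rule count[OF assms(2)])
  finally have rotated: "(\<Sum>u\<in>{0..<m}. of_bool ((a + u) mod m \<in> X) :: int) = int (card X)" .
  have joint: "(\<Sum>u\<in>{0..<m}. of_bool ((a + u) mod m \<in> X \<and> u \<in> Y) :: int)
      = int (diff_count m X Y a)"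
    by (simp add: diff_count_eq_card_rotate[OF assms(2,3)] Int_def conj_commute)
  have expand: "set_sign X v * set_sign Y u
      = 1 - 2 * of_bool (v \<in> X) - 2 * of_bool (u \<in> Y) + 4 * of_bool (v \<in> X \<and> u \<in> Y)" for u v
    by (simp add: set_sign_def)
  show ?thesis
    unfolding expand
    by (simp add: sum.distrib sum_subtractf sum_distrib_left[symmetric] rotated joint count[OF assms(3)])
qed

lemma diff_symmetric_iff_diff_count:
  "diff_symmetric m B D \<longleftrightarrow> (\<forall>w\<in>{0..<m}. diff_count m B D w = diff_count m D B w)"
proof -
  have neg: "[int y - int x = - c] (mod n) \<longleftrightarrow> [int x - int y = c] (mod n)" for x y :: nat and c n :: int
    by (metis cong_minus_minus_iff minus_diff_eq)
  have "{(x, y). x \<in> D \<and> y \<in> B \<and> [int x - int y = int w] (mod int m)}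
      = prod.swap ` {(x, y). x \<in> B \<and> y \<in> D \<and> [int x - int y = - int w] (mod int m)}" for w
    by (auto simp: image_iff neg)
  then show ?thesis
    unfolding diff_symmetric_def diff_count_def by (simp add: card_image)
qed

lemma sum_Gset:
  "(\<Sum>g\<in>Gset m. f g) = (\<Sum>u\<in>{0..<m}. f (0, u)) + (\<Sum>u\<in>{0..<m}. f (1, u))"
proof -
  have "Gset m = {0, 1} \<times> {0..<m}" by (auto simp: Gset_def)
  then show ?thesis
    by (simp add: sum.cartesian_product')
qed

lemma sum_Gset_nonzero:
  assumes "m > 0"
  shows "(\<Sum>g\<in>Gset m - {(0, 0)}. f g :: 'a::ab_group_add)
       = (\<Sum>u\<in>{1..<m}. f (0, u)) + (\<Sum>u\<in>{0..<m}. f (1, u))"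
proof -
  have "(0, 0) \<in> Gset m" using assms by (simp add: Gset_def)
  then have "(\<Sum>g\<in>Gset m - {(0, 0)}. f g) = (\<Sum>g\<in>Gset m. f g) - f (0, 0)"
    by (simp add: sum_diff1 Gset_def)
  then show ?thesis
    using sum.atLeast_Suc_lessThan[OF assms, of "\<lambda>u. f (0, u)"] by (simp add: sum_Gset)
qed

lemma lam_cobound_not_coboundary:
  assumes "m > 0" and "\<forall>g\<in>Gset m. \<phi> g \<in> {1, -1}"
  shows "\<not> is_coboundary m (\<lambda>g h. lam g h * cobound m \<phi> g h)"
proof
  assume "is_coboundary m (\<lambda>g h. lam g h * cobound m \<phi> g h)"
  then obtain \<phi>' where \<phi>': "\<forall>g\<in>Gset m. \<phi>' g \<in> {1, -1}"
    and eq: "\<forall>g\<in>Gset m. \<forall>h\<in>Gset m. lam g h * cobound m \<phi> g h = cobound m \<phi>' g h"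
    unfolding is_coboundary_def by blast
  have in_G: "(0, 0) \<in> Gset m" "(1, 0) \<in> Gset m"
    using assms(1) by (auto simp: Gset_def)
  have "\<phi> (0, 0) ^ 3 = \<phi>' (0, 0) ^ 3"
    using eq in_G by (force simp: lam_def cobound_def gadd_def power3_eq_cube)
  moreover have "- (\<phi> (1, 0) ^ 2 * \<phi> (0, 0)) = \<phi>' (1, 0) ^ 2 * \<phi>' (0, 0)"
    using eq in_G by (force simp: lam_def cobound_def gadd_def power2_eq_square)
  moreover have "\<phi> (0, 0) \<in> {1, -1}" "\<phi> (1, 0) \<in> {1, -1}" "\<phi>' (0, 0) \<in> {1, -1}" "\<phi>' (1, 0) \<in> {1, -1}"
    using assms(2) \<phi>' in_G by blast+
  ultimately show False
    by auto
qed

definition fiber_sign :: "nat set \<Rightarrow> nat set \<Rightarrow> nat \<times> nat \<Rightarrow> int" where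
  "fiber_sign B D = set_sign ({0} \<times> B \<union> {1} \<times> D)"

lemma fiber_sign_simps [simp]:
  "fiber_sign B D (0, u) = set_sign B u"
  "fiber_sign B D (Suc 0, u) = set_sign D u"
  by (simp_all add: fiber_sign_def set_sign_def)

definition psi_BD :: "nat \<Rightarrow> nat set \<Rightarrow> nat set \<Rightarrow> nat \<times> nat \<Rightarrow> nat \<times> nat \<Rightarrow> int" where
  "psi_BD m B D g h = lam g h * cobound m (fiber_sign B D) g h"

context
  fixes m :: nat and B D :: "nat set"
  assumes m_pos: "m > 0" and B_sub: "B \<subseteq> {0..<m}" and D_sub: "D \<subseteq> {0..<m}"
begin

lemma psi_BD_row_sum_0:
  "(\<Sum>h\<in>Gset m. psi_BD m B D (0, a) h)
     = set_sign B a * (2 * int m - 4 * (int (card B) + int (card D)) + 4 * N_BD m B D a)"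
proof -
  have entries: "psi_BD m B D (0, a) (0, u) = set_sign B a * (set_sign B ((a + u) mod m) * set_sign B u)"
    "psi_BD m B D (0, a) (1, u) = set_sign B a * (set_sign D ((a + u) mod m) * set_sign D u)" for u
    by (simp_all add: psi_BD_def cobound_def lam_def gadd_def mult_ac)
  have "N_BD m B D a = int (diff_count m B B a) + int (diff_count m D D a)"
    by (simp add: N_BD_def diff_count_def)
  then show ?thesis
    unfolding sum_Gset entries sum_distrib_left[symmetric]
      sum_set_sign_rotate_product[OF m_pos B_sub B_sub] sum_set_sign_rotate_product[OF m_pos D_sub D_sub]
    by (simp add: algebra_simps)
qed

lemma psi_BD_row_sum_1:
  "(\<Sum>h\<in>Gset m. psi_BD m B D (1, a) h)
     = set_sign D a * (4 * (int (diff_count m D B a) - int (diff_count m B D a)))"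
proof -
  have entries: "psi_BD m B D (1, a) (0, u) = set_sign D a * (set_sign D ((a + u) mod m) * set_sign B u)"
    "psi_BD m B D (1, a) (1, u) = - (set_sign D a * (set_sign B ((a + u) mod m) * set_sign D u))" for u
    by (simp_all add: psi_BD_def cobound_def lam_def gadd_def mult_ac)
  show ?thesis
    unfolding sum_Gset entries sum_negf sum_distrib_left[symmetric]
      sum_set_sign_rotate_product[OF m_pos B_sub D_sub] sum_set_sign_rotate_product[OF m_pos D_sub B_sub]
    by (simp add: algebra_simps)
qed

lemma row_excess_psi_BD:
  "row_excess m (psi_BD m B D)
     = (\<Sum>a\<in>{1..<m}. \<bar>2 * int m - 4 * (int (card B) + int (card D)) + 4 * N_BD m B D a\<bar>)
     + (\<Sum>a\<in>{0..<m}. \<bar>4 * (int (diff_count m D B a) - int (diff_count m B D a))\<bar>)"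
  unfolding row_excess_def sum_Gset_nonzero[OF m_pos] psi_BD_row_sum_0 psi_BD_row_sum_1
  by (simp add: abs_mult)

end

lemma quasi_orthogonal_psi_BD_iff_row_excess:
  assumes "odd m"
  shows "quasi_orthogonal m (psi_BD m B D) \<longleftrightarrow> row_excess m (psi_BD m B D) = 2 * int m - 2"
proof -
  have "\<not> is_coboundary m (psi_BD m B D)"
    using lam_cobound_not_coboundary[of m "fiber_sign B D"] odd_pos[OF assms]
    by (simp add: psi_BD_def[abs_def] fiber_sign_def set_sign_def)
  moreover have "(int (card (Gset m)) - 2) div 4 = (int m - 1) div 2"
    by (simp add: Gset_def card_cartesian_product)
  ultimately show ?thesis
    using assms unfolding quasi_orthogonal_def Let_def by (auto elim!: oddE)
qed

lemma quasi_orthogonal_psi_BD_iff: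
  assumes "odd m" "m > 1" "B \<subseteq> {0..<m}" "D \<subseteq> {0..<m}"
  shows "quasi_orthogonal m (psi_BD m B D) \<longleftrightarrow>
    ASDS m (card B) (card D) (int (card B) + int (card D) - int ((m + 1) div 2)) B D
    \<and> diff_symmetric m B D"
proof -
  define \<mu> where "\<mu> = int (card B) + int (card D) - int ((m + 1) div 2)"
  define surplus where
    "surplus a = \<bar>2 * int m - 4 * (int (card B) + int (card D)) + 4 * N_BD m B D a\<bar> - 2" for a
  define row1 where "row1 a = \<bar>4 * (int (diff_count m D B a) - int (diff_count m B D a))\<bar>" for a
  have surplus_alt: "surplus a = \<bar>4 * (N_BD m B D a - \<mu>) - 2\<bar> - 2" for a
    using assms(1) by (auto simp: surplus_def \<mu>_def elim!: oddE)
  then have surplus_nonneg: "surplus a \<ge> 0" for a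
    by arith
  have surplus_eq_0: "surplus a = 0 \<longleftrightarrow> N_BD m B D a \<in> {\<mu>, \<mu> + 1}" for a
    unfolding surplus_alt by auto
  have "row_excess m (psi_BD m B D)
      = (\<Sum>a\<in>{1..<m}. surplus a) + (\<Sum>a\<in>{0..<m}. row1 a) + (2 * int m - 2)"
    using assms(2)
    by (simp add: row_excess_psi_BD[OF _ assms(3,4)] surplus_def row1_def sum_subtractf of_nat_diff)
  then have "quasi_orthogonal m (psi_BD m B D)
      \<longleftrightarrow> (\<Sum>a\<in>{1..<m}. surplus a) + (\<Sum>a\<in>{0..<m}. row1 a) = 0"
    by (simp add: quasi_orthogonal_psi_BD_iff_row_excess[OF assms(1)])
  also have "\<dots> \<longleftrightarrow> (\<forall>a\<in>{1..<m}. surplus a = 0) \<and> (\<forall>a\<in>{0..<m}. row1 a = 0)"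
    by (simp add: add_nonneg_eq_0_iff sum_nonneg sum_nonneg_eq_0_iff surplus_nonneg row1_def)
  also have "\<dots> \<longleftrightarrow> ASDS m (card B) (card D) \<mu> B D \<and> diff_symmetric m B D"
    using assms(3,4) by (auto simp: ASDS_def surplus_eq_0 row1_def diff_symmetric_iff_diff_count)
  finally show ?thesis
    unfolding \<mu>_def .
qed

lemma prod_cobound_power:
  "(\<Prod>j\<in>J. cobound m (\<phi> j) g h ^ k j) = cobound m (\<lambda>x. \<Prod>j\<in>J. \<phi> j x ^ k j) g h"
  unfolding cobound_def power_mult_distrib prod.distrib ..

lemma inj_on_gelt: "inj_on (gelt m) {1..}"
  by (auto simp: inj_on_def gelt_def split: if_splits)

lemma prod_eps_power:
  assumes "finite J" "\<forall>j\<in>J. j \<ge> 1" "\<forall>j\<in>J. k j \<in> {0, 1}"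
  shows "(\<Prod>j\<in>J. eps m j g ^ k j) = set_sign (gelt m ` {j\<in>J. k j = 1}) g"
proof -
  let ?T = "{j\<in>J. k j = 1}"
  have "(\<Prod>j\<in>J. eps m j g ^ k j) = (\<Prod>j\<in>J. if k j = 1 then eps m j g else 1)"
    using assms(3) by (intro prod.cong) auto
  also have "\<dots> = (\<Prod>j\<in>?T. eps m j g)"
    by (simp add: prod.inter_filter[OF assms(1)])
  also have "\<dots> = set_sign (gelt m ` ?T) g"
  proof (cases "g \<in> gelt m ` ?T")
    case True
    then obtain i where i: "i \<in> ?T" "gelt m i = g" by blast
    have "gelt m j \<noteq> g" if "j \<in> ?T - {i}" for j
      using that i assms(2) inj_on_gelt by (auto dest: inj_onD)
    then have "(\<Prod>j\<in>?T - {i}. eps m j g) = 1"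
      by (intro prod.neutral) (auto simp: eps_def)
    moreover have "(\<Prod>j\<in>?T. eps m j g) = eps m i g * (\<Prod>j\<in>?T - {i}. eps m j g)"
      using assms(1) i by (intro prod.remove) auto
    ultimately show ?thesis
      using True i by (simp add: eps_def set_sign_def)
  next
    case False
    then show ?thesis
      by (auto simp: eps_def set_sign_def intro!: prod.neutral)
  qed
  finally show ?thesis .
qed

lemma gelt_image_eq:
  assumes "m > 0"
  shows "gelt m ` {j\<in>{2..2*m-1}. k j = 1}
    = {0} \<times> {j - 1 | j. 2 \<le> j \<and> j \<le> m \<and> k j = 1}
      \<union> {1} \<times> {j - m - 1 | j. m + 1 \<le> j \<and> j \<le> 2*m - 1 \<and> k j = 1}"
  (is "?L = ?R")
proof
  show "?L \<subseteq> ?R"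
    by (auto simp: gelt_def)
  have "(0, j - 1) = gelt m j" if "j \<le> m" for j
    using that by (simp add: gelt_def)
  moreover have "(1, j - m - 1) = gelt m j" if "m < j" for j
    using that by (simp add: gelt_def)
  ultimately show "?R \<subseteq> ?L"
    using assms by (fastforce intro: rev_image_eqI)
qed

lemma psi_eq_psi_BD:
  assumes "m > 0" "\<forall>j\<in>{2..2*m-1}. k j \<in> {0, 1}"
  shows "psi m k = psi_BD m {j - 1 | j. 2 \<le> j \<and> j \<le> m \<and> k j = 1}
                            {j - m - 1 | j. m + 1 \<le> j \<and> j \<le> 2*m - 1 \<and> k j = 1}"
proof -
  have "(\<lambda>x. \<Prod>j\<in>{2..2*m-1}. eps m j x ^ k j)
      = fiber_sign {j - 1 | j. 2 \<le> j \<and> j \<le> m \<and> k j = 1}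
                   {j - m - 1 | j. m + 1 \<le> j \<and> j \<le> 2*m - 1 \<and> k j = 1}"
    using prod_eps_power[of "{2..2*m-1}" k m] gelt_image_eq[OF assms(1), of k] assms(2)
    by (simp add: fiber_sign_def)
  then show ?thesis
    unfolding psi_def[abs_def] psi_BD_def[abs_def] prod_cobound_power by simp
qed

theorem theorem4:
  fixes m :: nat and k :: "nat \<Rightarrow> nat"
  assumes "odd m" and "m > 1"
    and "\<forall>j\<in>{2..2*m-1}. k j \<in> {0, 1}"
  shows "quasi_orthogonal m (psi m k) \<longleftrightarrow>
    (let B = {j - 1 | j. 2 \<le> j \<and> j \<le> m \<and> k j = 1};
         D = {j - m - 1 | j. m + 1 \<le> j \<and> j \<le> 2*m - 1 \<and> k j = 1}
     in ASDS m (card B) (card D) (int (card B) + int (card D) - int ((m + 1) div 2)) B D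
        \<and> diff_symmetric m B D)"
proof -
  define B where "B = {j - 1 | j. 2 \<le> j \<and> j \<le> m \<and> k j = 1}"
  define D where "D = {j - m - 1 | j. m + 1 \<le> j \<and> j \<le> 2*m - 1 \<and> k j = 1}"
  have "psi m k = psi_BD m B D"
    unfolding B_def D_def using assms(2,3) by (simp add: psi_eq_psi_BD)
  moreover have "B \<subseteq> {0..<m}" "D \<subseteq> {0..<m}"
    unfolding B_def D_def by auto
  ultimately show ?thesis
    unfolding Let_def B_def[symmetric] D_def[symmetric]
    using quasi_orthogonal_psi_BD_iff[OF assms(1,2)] by simp
qed

end
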